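(* Let $(X,T),(Y,S)$ be $1$-step shifts of finite type over a finite alphabet $\mathcal{A}$, let $F:\mathcal{A}^2\to\mathbb{R}$ and $f(x,y)=F(x(0),y(0))$. Let $(C_n)_{n\ge1}$ be a non-increasing sequence of nonnegative reals converging to $C$. Then $Y_{f,C}=\bigcap_{n\ge1}Y_{f,C_n}$. In particular, if $Y_{f,C_n}\neq\emptyset$ for all $n$, then $Y_{f,C}\neq\emptyset$.
   Context: $\mathcal{A}^{\mathbb{Z}}$ carries the product of discrete topologies and the left shift $(Tx)(j)=x(j+1)$. A shift is a nonempty compact $X\subseteq\mathcal{A}^{\mathbb{Z}}$ with $TX=X$; it is a $1$-step shift of finite type if there is $\mathcal{F}\subseteq\mathcal{A}^{\{0,1\}}$ with $X=\{x:(T^jx)|_{[0,1]}\notin\mathcal{F}\ \forall j\in\mathbb{Z}\}$. $\mathbb{S}_{[a,b]}f(x,y)=\sum_{j=a}^bf(T^jx,S^jy)$. For integers $a\le b$: $P_{a,b}=\{(v_1,v_2)\in\mathcal{A}^2:\exists x\in X,\ x(a)=v_1,x(b)=v_2\}$; for $(v_1,v_2)\in P_{a,b}$, $y\in Y$: $H_{a,b,v_1,v_2}(y)=\min\{\mathbb{S}_{[a,b]}f(x,y):x\in X,x(a)=v_1,x(b)=v_2\}$. For $C\ge0$, $Y_{f,C}$ is the set of $y\in Y$ such that for all integers $a\le b$ there is $(v_1,v_2)\in P_{a,b}$ with $H_{a,b,v_1,v_2}(y)\ge\max\{H_{a,b,v_1,v_2}(y'):y'\in Y,\ y'|_{\mathbb{Z}\setminus[a,b]}=y|_{\mathbb{Z}\setminus[a,b]}\}-C$.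 *)

theory Defs
  imports Complex_Main
begin

definition shiftT :: "(int \<Rightarrow> 'a) \<Rightarrow> (int \<Rightarrow> 'a)" where
  "shiftT x = (\<lambda>j. x (j + 1))"

definition shift_pow :: "int \<Rightarrow> (int \<Rightarrow> 'a) \<Rightarrow> (int \<Rightarrow> 'a)" where
  "shift_pow k x = (\<lambda>j. x (j + k))"

text \<open>A 1-step shift of finite type: nonempty, shift invariant, and defined by a set of
  forbidden 2-blocks (compactness in the product of discrete topologies is automatic
  for such sets).\<close>
definition sft1 :: "(int \<Rightarrow> 'a::finite) set \<Rightarrow> bool" where
  "sft1 X \<longleftrightarrow> X \<noteq> {} \<and> shiftT ` X = X \<and>
     (\<exists>Fb :: ('a \<times> 'a) set. X = {x. \<forall>j. (x j, x (j + 1)) \<notin> Fb})"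

definition birk_sum ::
  "((int \<Rightarrow> 'a) \<Rightarrow> (int \<Rightarrow> 'a) \<Rightarrow> real) \<Rightarrow> int \<Rightarrow> int \<Rightarrow> (int \<Rightarrow> 'a) \<Rightarrow> (int \<Rightarrow> 'a) \<Rightarrow> real" where
  "birk_sum f a b x y = (\<Sum>j\<in>{a..b}. f (shift_pow j x) (shift_pow j y))"

definition Pset :: "(int \<Rightarrow> 'a) set \<Rightarrow> int \<Rightarrow> int \<Rightarrow> ('a \<times> 'a) set" where
  "Pset X a b = {(v1, v2). \<exists>x\<in>X. x a = v1 \<and> x b = v2}"

text \<open>The minimum (realised as infimum; it is attained for locally constant f).\<close>
definition Hfun ::
  "(int \<Rightarrow> 'a) set \<Rightarrow> ((int \<Rightarrow> 'a) \<Rightarrow> (int \<Rightarrow> 'a) \<Rightarrow> real) \<Rightarrow> int \<Rightarrow> int \<Rightarrow> 'a \<Rightarrow> 'a \<Rightarrow> (int \<Rightarrow> 'a) \<Rightarrow> real" where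
  "Hfun X f a b v1 v2 y = Inf {birk_sum f a b x y | x. x \<in> X \<and> x a = v1 \<and> x b = v2}"

definition Yfc ::
  "(int \<Rightarrow> 'a) set \<Rightarrow> (int \<Rightarrow> 'a) set \<Rightarrow> ((int \<Rightarrow> 'a) \<Rightarrow> (int \<Rightarrow> 'a) \<Rightarrow> real) \<Rightarrow> real \<Rightarrow> (int \<Rightarrow> 'a) set" where
  "Yfc X Y f C = {y \<in> Y. \<forall>a b. a \<le> b \<longrightarrow>
      (\<exists>(v1, v2) \<in> Pset X a b.
         Hfun X f a b v1 v2 y \<ge>
           Sup {Hfun X f a b v1 v2 y' | y'. y' \<in> Y \<and> (\<forall>i. i \<notin> {a..b} \<longrightarrow> y' i = y i)} - C)}"

end

theory Submission
  imports Defs "HOL-Library.Countable" "HOL-Library.Infinite_Set" "HOL-Library.Diagonal_Subsequence"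
begin

text \<open>Whether y lies in \<open>Y\<^sub>f\<^sub>,\<^sub>C\<close> is decided window by window: on \<open>[a,b]\<close> some of the finitely
  many admissible boundary pairs must have defect \<open>sup H - H(y) \<le> C\<close>. A minimum over a finite
  set that is \<open>\<le> C\<^sub>n\<close> for all n is \<open>\<le> C\<close>, whence \<open>Y\<^sub>f\<^sub>,\<^sub>C = \<Inter>\<^sub>n Y\<^sub>f\<^sub>,\<^sub>C\<^sub>n\<close>.
  For a 1-step SFT Y and f depending on \<open>y(0)\<close> only, the defect on \<open>[a,b]\<close> depends only on
  \<open>y|[a-1,b+1]\<close>, because a competitor that differs from y on \<open>[a,b]\<close> can be spliced into any
  configuration agreeing with y on \<open>[a-1,b+1]\<close>. So the sets \<open>Y\<^sub>f\<^sub>,\<^sub>C\<^sub>n\<close> are closed and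
  decreasing in the compact space \<open>\<A>\<^sup>\<int>\<close>, and nonempty ones have nonempty intersection.\<close>

lemma finite_alphabet_seq_compact:
  fixes u :: "nat \<Rightarrow> 'i::countable \<Rightarrow> 'a::finite"
  shows "\<exists>r y. strict_mono r \<and> (\<forall>j. \<forall>\<^sub>F n in sequentially. u (r n) j = y j)"
proof -
  \<comment> \<open>Diagonal argument: along the k-th nested subsequence the coordinate \<open>from_nat k\<close> is constant.\<close>
  define P where "P k s \<longleftrightarrow> (\<forall>i. u (s i) (from_nat k) = u (s 0) (from_nat k))"
    for k and s :: "nat \<Rightarrow> nat"
  interpret subseqs P
  proof
    fix k and s :: "nat \<Rightarrow> nat"
    obtain i0 where "infinite {i. u (s i) (from_nat k) = u (s i0) (from_nat k)}"
      using pigeonhole_infinite[of UNIV "\<lambda>i. u (s i) (from_nat k)"] by auto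
    then obtain r :: "nat \<Rightarrow> nat"
      where "strict_mono r" and "\<forall>n. u (s (r n)) (from_nat k) = u (s i0) (from_nat k)"
      using infinite_enumerate by blast
    then show "\<exists>r. strict_mono r \<and> P k (s \<circ> r)"
      by (auto simp: P_def)
  qed
  define y where "y j = u (diagseq (Suc (to_nat j))) j" for j
  have "\<forall>\<^sub>F n in sequentially. u (diagseq n) j = y j" for j
  proof -
    have "P (to_nat j) (diagseq \<circ> (+) (Suc (to_nat j)))"
      by (rule diagseq_holds) (metis P_def comp_apply)
    then have "u (diagseq n) j = y j" if "n \<ge> Suc (to_nat j)" for n
      using that by (auto simp: P_def y_def dest!: spec[of _ "n - Suc (to_nat j)"])
    then show ?thesis
      unfolding eventually_sequentially by blast
  qed
  with subseq_diagseq show ?thesis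
    by blast
qed

definition cylinder_closed :: "('i \<Rightarrow> 'a) set \<Rightarrow> bool" where
  "cylinder_closed S \<longleftrightarrow>
     (\<forall>y. (\<forall>J. finite J \<longrightarrow> (\<exists>z\<in>S. \<forall>j\<in>J. z j = y j)) \<longrightarrow> y \<in> S)"

lemma cylinder_closedI:
  assumes "\<And>y. (\<And>J. finite J \<Longrightarrow> \<exists>z\<in>S. \<forall>j\<in>J. z j = y j) \<Longrightarrow> y \<in> S"
  shows "cylinder_closed S"
  using assms unfolding cylinder_closed_def by blast

lemma cylinder_closedD:
  assumes "cylinder_closed S" and "\<And>J. finite J \<Longrightarrow> \<exists>z\<in>S. \<forall>j\<in>J. z j = y j"
  shows "y \<in> S"
  using assms unfolding cylinder_closed_def by blast

lemma decseq_cylinder_closed_Inter_nonempty: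
  fixes S :: "nat \<Rightarrow> ('i::countable \<Rightarrow> 'a::finite) set"
  assumes "decseq S" and "\<And>n. S n \<noteq> {}" and "\<And>n. cylinder_closed (S n)"
  shows "(\<Inter>n. S n) \<noteq> {}"
proof -
  have "\<forall>n. \<exists>x. x \<in> S n"
    using assms(2) by blast
  then obtain z where z: "\<And>n. z n \<in> S n"
    by metis
  obtain r y where "strict_mono r" and lim: "\<And>j. \<forall>\<^sub>F n in sequentially. z (r n) j = y j"
    using finite_alphabet_seq_compact[of z] by blast
  have "y \<in> S m" for m
  proof (rule cylinder_closedD[OF assms(3)])
    fix J :: "'i set"
    assume "finite J"
    have "\<forall>\<^sub>F n in sequentially. n \<ge> m \<and> (\<forall>j\<in>J. z (r n) j = y j)"
      using lim \<open>finite J\<close> by (intro eventually_conj eventually_ge_at_top eventually_ball_finite) auto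
    then obtain n where "n \<ge> m" and agree: "\<forall>j\<in>J. z (r n) j = y j"
      unfolding eventually_sequentially by (meson order.refl)
    have "m \<le> r n"
      using \<open>n \<ge> m\<close> seq_suble[OF \<open>strict_mono r\<close>] order.trans by blast
    then have "z (r n) \<in> S m"
      using z assms(1) by (auto simp: decseq_def)
    with agree show "\<exists>z\<in>S m. \<forall>j\<in>J. z j = y j"
      by blast
  qed
  then show ?thesis
    by blast
qed

lemma sft_cylinder_closed:
  "cylinder_closed {x :: int \<Rightarrow> 'a. \<forall>j. (x j, x (j + 1)) \<notin> Fb}"
proof (rule cylinder_closedI, intro CollectI allI)
  fix y :: "int \<Rightarrow> 'a" and j :: int
  assume approx: "\<And>J. finite J \<Longrightarrow> \<exists>z\<in>{x. \<forall>j. (x j, x (j + 1)) \<notin> Fb}. \<forall>i\<in>J. z i = y i"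
  obtain z where "\<forall>j. (z j, z (j + 1)) \<notin> Fb" and "\<forall>i\<in>{j, j + 1}. z i = y i"
    using approx[of "{j, j + 1}"] by auto
  then show "(y j, y (j + 1)) \<notin> Fb"
    by (metis insertCI)
qed

lemma sft_splice:
  fixes u w :: "int \<Rightarrow> 'a"
  assumes "u \<in> {x. \<forall>j. (x j, x (j + 1)) \<notin> Fb}" and "w \<in> {x. \<forall>j. (x j, x (j + 1)) \<notin> Fb}"
    and "u (a - 1) = w (a - 1)" and "u (b + 1) = w (b + 1)"
  shows "(\<lambda>i. if i \<in> {a..b} then u i else w i) \<in> {x. \<forall>j. (x j, x (j + 1)) \<notin> Fb}"
proof (intro CollectI allI)
  fix j
  let ?s = "\<lambda>i. if i \<in> {a..b} then u i else w i"
  consider "j \<in> {a..b}" "j + 1 \<in> {a..b}" | "j \<notin> {a..b}" "j + 1 \<notin> {a..b}"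
    | "j = a - 1" "a \<le> b" | "j = b" "a \<le> b"
    by (cases "j \<in> {a..b}"; cases "j + 1 \<in> {a..b}") (auto simp: not_le)
  then have "(?s j, ?s (j + 1)) = (u j, u (j + 1)) \<or> (?s j, ?s (j + 1)) = (w j, w (j + 1))"
    by cases (use assms(3,4) in auto)
  then show "(?s j, ?s (j + 1)) \<notin> Fb"
    using assms(1,2) by auto
qed

lemma finite_ex_le_limit:
  fixes g :: "'b \<Rightarrow> real"
  assumes "finite P" and "\<And>n. \<exists>p\<in>P. g p \<le> c n" and "c \<longlonglongrightarrow> L"
  shows "\<exists>p\<in>P. g p \<le> L"
proof -
  have "P \<noteq> {}"
    using assms(2) by blast
  have "Min (g ` P) \<le> c n" for n
  proof -
    obtain p where "p \<in> P" and "g p \<le> c n"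
      using assms(2) by blast
    moreover have "Min (g ` P) \<le> g p"
      using assms(1) \<open>p \<in> P\<close> by simp
    ultimately show ?thesis
      by linarith
  qed
  then have "Min (g ` P) \<le> L"
    using LIMSEQ_le_const[OF assms(3)] by blast
  moreover have "Min (g ` P) \<in> g ` P"
    using assms(1) \<open>P \<noteq> {}\<close> by simp
  ultimately show ?thesis
    by auto
qed

lemma birk_sum_local:
  assumes "\<And>x y y'. y 0 = y' 0 \<Longrightarrow> f x y = f x y'" and "\<forall>j\<in>{a..b}. y j = z j"
  shows "birk_sum f a b x y = birk_sum f a b x z"
  unfolding birk_sum_def
proof (rule sum.cong)
  fix j assume "j \<in> {a..b}"
  then have "shift_pow j y 0 = shift_pow j z 0"
    using assms(2) by (simp add: shift_pow_def)
  then show "f (shift_pow j x) (shift_pow j y) = f (shift_pow j x) (shift_pow j z)"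
    by (rule assms(1))
qed simp

lemma Hfun_local:
  assumes "\<And>x y y'. y 0 = y' 0 \<Longrightarrow> f x y = f x y'" and "\<forall>j\<in>{a..b}. y j = z j"
  shows "Hfun X f a b v1 v2 y = Hfun X f a b v1 v2 z"
  unfolding Hfun_def using birk_sum_local[OF assms] by simp

definition Hdefect ::
  "(int \<Rightarrow> 'a) set \<Rightarrow> (int \<Rightarrow> 'a) set \<Rightarrow> ((int \<Rightarrow> 'a) \<Rightarrow> (int \<Rightarrow> 'a) \<Rightarrow> real)
     \<Rightarrow> int \<Rightarrow> int \<Rightarrow> 'a \<times> 'a \<Rightarrow> (int \<Rightarrow> 'a) \<Rightarrow> real" where
  "Hdefect X Y f a b v y =
     Sup {Hfun X f a b (fst v) (snd v) y' | y'. y' \<in> Y \<and> (\<forall>i. i \<notin> {a..b} \<longrightarrow> y' i = y i)}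
     - Hfun X f a b (fst v) (snd v) y"

lemma mem_Yfc_iff:
  "y \<in> Yfc X Y f c \<longleftrightarrow>
     y \<in> Y \<and> (\<forall>a b. a \<le> b \<longrightarrow> (\<exists>v\<in>Pset X a b. Hdefect X Y f a b v y \<le> c))"
  unfolding Yfc_def Hdefect_def by (auto simp: split_beta algebra_simps)

lemma Yfc_subset: "Yfc X Y f c \<subseteq> Y"
  by (auto simp: mem_Yfc_iff)

lemma Yfc_mono: "c \<le> c' \<Longrightarrow> Yfc X Y f c \<subseteq> Yfc X Y f c'"
  unfolding subset_iff mem_Yfc_iff by (meson order_trans)

lemma competitor_values_local:
  assumes f_local: "\<And>x y y'. y 0 = y' 0 \<Longrightarrow> f x y = f x y'"
    and Y: "Y = {x. \<forall>j. (x j, x (j + 1)) \<notin> Fb}" and "y \<in> Y" "z \<in> Y"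
    and "a \<le> b" and agree: "\<forall>j\<in>{a - 1..b + 1}. y j = z j"
  shows "{Hfun X f a b v1 v2 y' | y'. y' \<in> Y \<and> (\<forall>i. i \<notin> {a..b} \<longrightarrow> y' i = y i)}
       \<subseteq> {Hfun X f a b v1 v2 z' | z'. z' \<in> Y \<and> (\<forall>i. i \<notin> {a..b} \<longrightarrow> z' i = z i)}"
proof safe
  fix y' assume "y' \<in> Y" and outside: "\<forall>i. i \<notin> {a..b} \<longrightarrow> y' i = y i"
  define z' where "z' = (\<lambda>i. if i \<in> {a..b} then y' i else z i)"
  have "a - 1 \<notin> {a..b}" and "b + 1 \<notin> {a..b}"
    by auto
  then have "y' (a - 1) = z (a - 1)" and "y' (b + 1) = z (b + 1)"
    using outside[rule_format, of "a - 1"] outside[rule_format, of "b + 1"] agree \<open>a \<le> b\<close> by auto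
  then have "z' \<in> Y"
    unfolding z'_def Y using sft_splice \<open>y' \<in> Y\<close> \<open>z \<in> Y\<close> Y by blast
  moreover have "Hfun X f a b v1 v2 y' = Hfun X f a b v1 v2 z'"
    by (rule Hfun_local[where f = f, OF f_local]) (auto simp: z'_def)
  moreover have "\<forall>i. i \<notin> {a..b} \<longrightarrow> z' i = z i"
    by (simp add: z'_def)
  ultimately show "\<exists>z'. Hfun X f a b v1 v2 y' = Hfun X f a b v1 v2 z' \<and> z' \<in> Y
      \<and> (\<forall>i. i \<notin> {a..b} \<longrightarrow> z' i = z i)"
    by blast
qed

lemma Hdefect_local:
  assumes f_local: "\<And>x y y'. y 0 = y' 0 \<Longrightarrow> f x y = f x y'"
    and Y: "Y = {x. \<forall>j. (x j, x (j + 1)) \<notin> Fb}" and "y \<in> Y" "z \<in> Y"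
    and "a \<le> b" and agree: "\<forall>j\<in>{a - 1..b + 1}. y j = z j"
  shows "Hdefect X Y f a b v y = Hdefect X Y f a b v z"
proof -
  have "\<forall>j\<in>{a - 1..b + 1}. z j = y j"
    using agree by simp
  then have "{Hfun X f a b (fst v) (snd v) y' | y'. y' \<in> Y \<and> (\<forall>i. i \<notin> {a..b} \<longrightarrow> y' i = y i)}
       = {Hfun X f a b (fst v) (snd v) z' | z'. z' \<in> Y \<and> (\<forall>i. i \<notin> {a..b} \<longrightarrow> z' i = z i)}"
    using competitor_values_local[where f = f, OF f_local Y] assms(3-6) by (intro antisym) blast+
  moreover have "Hfun X f a b (fst v) (snd v) y = Hfun X f a b (fst v) (snd v) z"
    by (rule Hfun_local[where f = f, OF f_local]) (use agree in auto)
  ultimately show ?thesis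
    unfolding Hdefect_def by simp
qed

lemma Yfc_cylinder_closed:
  assumes f_local: "\<And>x y y'. y 0 = y' 0 \<Longrightarrow> f x y = f x y'"
    and Y: "Y = {x. \<forall>j. (x j, x (j + 1)) \<notin> Fb}"
  shows "cylinder_closed (Yfc X Y f c)"
proof (rule cylinder_closedI)
  fix y assume approx: "\<And>J. finite J \<Longrightarrow> \<exists>z\<in>Yfc X Y f c. \<forall>j\<in>J. z j = y j"
  have "cylinder_closed Y"
    unfolding Y by (rule sft_cylinder_closed)
  then have "y \<in> Y"
  proof (rule cylinder_closedD)
    fix J :: "int set" assume "finite J"
    then show "\<exists>z\<in>Y. \<forall>j\<in>J. z j = y j"
      using approx[OF \<open>finite J\<close>] Yfc_subset by blast
  qed
  moreover have "\<exists>v\<in>Pset X a b. Hdefect X Y f a b v y \<le> c" if "a \<le> b" for a b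
  proof -
    obtain z where z: "z \<in> Yfc X Y f c" and agree: "\<forall>j\<in>{a - 1..b + 1}. z j = y j"
      using approx[OF finite_atLeastAtMost_int] by blast
    have "z \<in> Y"
      using z Yfc_subset by blast
    have "\<exists>v\<in>Pset X a b. Hdefect X Y f a b v z \<le> c"
      using z that unfolding mem_Yfc_iff by blast
    moreover have "Hdefect X Y f a b v z = Hdefect X Y f a b v y" for v
      by (rule Hdefect_local[where f = f, OF f_local Y \<open>z \<in> Y\<close> \<open>y \<in> Y\<close> that agree])
    ultimately show ?thesis
      by simp
  qed
  ultimately show "y \<in> Yfc X Y f c"
    unfolding mem_Yfc_iff by blast
qed

lemma Inter_Yfc_subset_limit:
  fixes X :: "(int \<Rightarrow> 'a::finite) set"
  assumes "c \<longlonglongrightarrow> L"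
  shows "(\<Inter>n. Yfc X Y f (c n)) \<subseteq> Yfc X Y f L"
proof
  fix y assume y: "y \<in> (\<Inter>n. Yfc X Y f (c n))"
  then have y_n: "y \<in> Yfc X Y f (c n)" for n
    by blast
  have "\<exists>p\<in>Pset X a b. Hdefect X Y f a b p y \<le> L" if "a \<le> b" for a b
  proof (rule finite_ex_le_limit)
    show "\<exists>p\<in>Pset X a b. Hdefect X Y f a b p y \<le> c n" for n
      using y_n[of n] that unfolding mem_Yfc_iff by blast
  qed (use assms in simp_all)
  moreover have "y \<in> Y"
    using y_n[of 0] unfolding mem_Yfc_iff by blast
  ultimately show "y \<in> Yfc X Y f L"
    unfolding mem_Yfc_iff by blast
qed

theorem lemma3p7:
  fixes X Y :: "(int \<Rightarrow> 'a::finite) set"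
    and F :: "'a \<Rightarrow> 'a \<Rightarrow> real"
    and Cs :: "nat \<Rightarrow> real" and C :: real
  assumes "sft1 X" and "sft1 Y"
    and "\<And>n. Cs (Suc n) \<le> Cs n"
    and "\<And>n. 0 \<le> Cs n"
    and "Cs \<longlonglongrightarrow> C"
  shows "Yfc X Y (\<lambda>x y. F (x 0) (y 0)) C = (\<Inter>n. Yfc X Y (\<lambda>x y. F (x 0) (y 0)) (Cs n))
    \<and> ((\<forall>n. Yfc X Y (\<lambda>x y. F (x 0) (y 0)) (Cs n) \<noteq> {}) \<longrightarrow> Yfc X Y (\<lambda>x y. F (x 0) (y 0)) C \<noteq> {})"
proof -
  let ?f = "\<lambda>x y. F (x 0) (y 0)"
  have "decseq Cs"
    using assms(3) by (rule decseq_SucI)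
  then have C_le: "C \<le> Cs n" for n
    using assms(5) by (rule decseq_ge)
  have "Yfc X Y ?f C \<subseteq> (\<Inter>n. Yfc X Y ?f (Cs n))"
    by (rule INT_greatest, rule Yfc_mono, rule C_le)
  with Inter_Yfc_subset_limit[OF assms(5)]
  have Yfc_eq: "Yfc X Y ?f C = (\<Inter>n. Yfc X Y ?f (Cs n))"
    by (rule antisym[rotated])
  obtain Fb where Y: "Y = {x. \<forall>j. (x j, x (j + 1)) \<notin> Fb}"
    using assms(2) unfolding sft1_def by blast
  have "decseq (\<lambda>n. Yfc X Y ?f (Cs n))"
    by (rule decseq_SucI, rule Yfc_mono, rule assms(3))
  moreover have "cylinder_closed (Yfc X Y ?f (Cs n))" for n
    by (rule Yfc_cylinder_closed[OF _ Y]) simp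
  ultimately have "(\<Inter>n. Yfc X Y ?f (Cs n)) \<noteq> {}" if "\<forall>n. Yfc X Y ?f (Cs n) \<noteq> {}"
    using that by (intro decseq_cylinder_closed_Inter_nonempty) auto
  with Yfc_eq show ?thesis
    by simp
qed

end
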